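(* In the RSP setting described in the context, let $b\in\mathbb{N}^+$ with $b\le n$, and let $i^*$ be the smallest integer $i\ge0$ with $C_{\mathrm{opt}}(G^-_{S_i})>b$. Then $i^*\le\lceil\log_2 n\rceil$.
   Context: RSP setting: $G=(V,E,c,r)$ is a weakly connected directed graph with $n=|V|$, $m=|E|$, $c,r:E\to\mathbb{R}_{\ge0}$, vertices $s\ne t$, bound $R\ge 0$. Paths are edge sets; $P_v$ = set of paths from $s$ to $v$; $C_G(p)=\sum_{e\in p}c(e)$, $R_G(p)=\sum_{e\in p}r(e)$; $C_{\mathrm{opt}}(G)=\min\{C_G(p):p\in P_t,\ R_G(p)\le R\}$. It is assumed that a path $p\in P_t$ with $R_G(p)\le R$ exists and that $C_{\mathrm{opt}}(G)>0$. For $S>0$, $G^-_S=(V,E,c^-_S,r)$ with $c^-_S(e)=\lfloor c(e)/S\rfloor$ (same $s,t,R$). Bounds $L,U$: sort the edges $e_1,\dots,e_m$ ascending by cost; let $j^*$ be the smallest $j$ such that some $p\in P_t$ with $R_G(p)\le R$ uses only edges from $\{e_1,\dots,e_j\}$; set $L=c(e_{j^*})$ and $U=nL$ (so $L\le C_{\mathrm{opt}}(G)\le U$). Scaling factors: $S_i=2^{-i}U/(2n)$ for $i\in\mathbb{N}_0$. *)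

theory Defs
  imports Complex_Main
begin

text \<open>A directed multigraph: vertex set V, edge set E of an abstract edge type,
  with tail function src and head function dst.\<close>

fun epath :: "('e \<Rightarrow> 'v) \<Rightarrow> ('e \<Rightarrow> 'v) \<Rightarrow> 'v \<Rightarrow> 'e list \<Rightarrow> 'v \<Rightarrow> bool" where
  "epath src dst u [] v = (u = v)"
| "epath src dst u (e # es) v = (src e = u \<and> epath src dst (dst e) es v)"

definition paths :: "'e set \<Rightarrow> ('e \<Rightarrow> 'v) \<Rightarrow> ('e \<Rightarrow> 'v) \<Rightarrow> 'v \<Rightarrow> 'v \<Rightarrow> 'e set set" where
  "paths E src dst s v =
     {set es | es. set es \<subseteq> E \<and> epath src dst s es v \<and> distinct (s # map dst es)}"

definition weakly_connected :: "'v set \<Rightarrow> 'e set \<Rightarrow> ('e \<Rightarrow> 'v) \<Rightarrow> ('e \<Rightarrow> 'v) \<Rightarrow> bool" where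
  "weakly_connected V E src dst \<longleftrightarrow>
     (\<forall>u\<in>V. \<forall>v\<in>V. (u, v) \<in> ({(src e, dst e) | e. e \<in> E} \<union> {(dst e, src e) | e. e \<in> E})\<^sup>*)"

definition feasible_paths ::
  "'e set \<Rightarrow> ('e \<Rightarrow> 'v) \<Rightarrow> ('e \<Rightarrow> 'v) \<Rightarrow> ('e \<Rightarrow> real) \<Rightarrow> 'v \<Rightarrow> 'v \<Rightarrow> real \<Rightarrow> 'e set set" where
  "feasible_paths E src dst r s t R = {p \<in> paths E src dst s t. (\<Sum>e\<in>p. r e) \<le> R}"

definition copt ::
  "'e set \<Rightarrow> ('e \<Rightarrow> 'v) \<Rightarrow> ('e \<Rightarrow> 'v) \<Rightarrow> ('e \<Rightarrow> real) \<Rightarrow> ('e \<Rightarrow> real) \<Rightarrow> 'v \<Rightarrow> 'v \<Rightarrow> real \<Rightarrow> real" where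
  "copt E src dst c r s t R = Min ((\<lambda>p. \<Sum>e\<in>p. c e) ` feasible_paths E src dst r s t R)"

definition scaled_cost :: "('e \<Rightarrow> real) \<Rightarrow> real \<Rightarrow> 'e \<Rightarrow> real" where
  "scaled_cost c S e = real_of_int \<lfloor>c e / S\<rfloor>"

text \<open>Lower bound L, given the edges listed ascending by cost as es = [e_1,...,e_m]
  (0-based in Isabelle: e_{j+1} = es ! j).\<close>
definition lower_bound ::
  "'e list \<Rightarrow> ('e \<Rightarrow> 'v) \<Rightarrow> ('e \<Rightarrow> 'v) \<Rightarrow> ('e \<Rightarrow> real) \<Rightarrow> ('e \<Rightarrow> real) \<Rightarrow> 'v \<Rightarrow> 'v \<Rightarrow> real \<Rightarrow> real" where
  "lower_bound es src dst c r s t R =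
     c (es ! (LEAST j. \<exists>p \<in> feasible_paths (set es) src dst r s t R. p \<subseteq> set (take (Suc j) es)))"

definition upper_bound ::
  "nat \<Rightarrow> 'e list \<Rightarrow> ('e \<Rightarrow> 'v) \<Rightarrow> ('e \<Rightarrow> 'v) \<Rightarrow> ('e \<Rightarrow> real) \<Rightarrow> ('e \<Rightarrow> real) \<Rightarrow> 'v \<Rightarrow> 'v \<Rightarrow> real \<Rightarrow> real" where
  "upper_bound n es src dst c r s t R = real n * lower_bound es src dst c r s t R"

definition scale_factor :: "nat \<Rightarrow> real \<Rightarrow> nat \<Rightarrow> real" where
  "scale_factor n U i = (1/2) ^ i * U / (2 * real n)"

end

theory Submission
  imports Defs
begin

text \<open>Minimality of \<open>j*\<close> means every feasible path contains an edge of cost at least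
  \<open>L = c(e_j*)\<close>, and \<open>C_opt(G) > 0\<close> forces \<open>L > 0\<close>. For \<open>k = \<lceil>log\<^sub>2 n\<rceil>\<close> the scaling factor
  is \<open>S_k = L / 2\<^sup>k\<^sup>+\<^sup>1\<close>, so such an edge alone has scaled cost at least \<open>2\<^sup>k\<^sup>+\<^sup>1 \<ge> 2n > b\<close>,
  whence \<open>C_opt(G\<^sup>-\<^sub>S\<^sub>k) > b\<close> and \<open>i* \<le> k\<close>.\<close>

lemma feasible_path_subset: "p \<in> feasible_paths E src dst r s t R \<Longrightarrow> p \<subseteq> E"
  unfolding feasible_paths_def paths_def by auto

lemma feasible_path_nonempty:
  assumes "p \<in> feasible_paths E src dst r s t R" and "s \<noteq> t"
  shows "p \<noteq> {}"
proof -
  obtain es where "p = set es" and "epath src dst s es t"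
    using assms(1) unfolding feasible_paths_def paths_def by blast
  moreover from \<open>epath src dst s es t\<close> assms(2) have "es \<noteq> []" by (cases es) auto
  ultimately show ?thesis by simp
qed

lemma finite_feasible_paths:
  assumes "finite E"
  shows "finite (feasible_paths E src dst r s t R)"
proof -
  have "feasible_paths E src dst r s t R \<subseteq> Pow E" by (auto dest: feasible_path_subset)
  then show ?thesis using assms by (simp add: finite_subset)
qed

lemma copt_le_path_cost:
  assumes "finite E" and "p \<in> feasible_paths E src dst r s t R"
  shows "copt E src dst c r s t R \<le> (\<Sum>e\<in>p. c e)"
  unfolding copt_def using assms(2) finite_feasible_paths[OF assms(1), of src dst r s t R] by (intro Min_le) auto

lemma copt_gt_if_expensive_edge:
  assumes "finite E" and "feasible_paths E src dst r s t R \<noteq> {}"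
    and "\<forall>e\<in>E. c e \<ge> 0"
    and "\<forall>p \<in> feasible_paths E src dst r s t R. \<exists>e\<in>p. c e > B"
  shows "copt E src dst c r s t R > B"
  unfolding copt_def
proof (subst Min_gr_iff)
  show "\<forall>a\<in>(\<lambda>p. \<Sum>e\<in>p. c e) ` feasible_paths E src dst r s t R. B < a"
  proof
    fix a assume "a \<in> (\<lambda>p. \<Sum>e\<in>p. c e) ` feasible_paths E src dst r s t R"
    then obtain p where p: "p \<in> feasible_paths E src dst r s t R" and a: "a = (\<Sum>e\<in>p. c e)"
      by auto
    have "p \<subseteq> E" using p by (rule feasible_path_subset)
    obtain e where "e \<in> p" "c e > B" using assms(4) p by blast
    moreover have "c e \<le> a"
      unfolding a using \<open>e \<in> p\<close> \<open>p \<subseteq> E\<close> assms(1,3)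
      by (intro member_le_sum) (auto intro: finite_subset)
    ultimately show "B < a" by linarith
  qed
qed (use assms(2) finite_feasible_paths[OF assms(1), of src dst r s t R] in auto)

lemma sorted_le_nth_if_in_take:
  assumes "sorted (map c es)" and "j < length es" and "e \<in> set (take (Suc j) es)"
  shows "c e \<le> c (es ! j)"
proof -
  obtain k where k: "k < length (take (Suc j) es)" "take (Suc j) es ! k = e"
    using assms(3) by (metis in_set_conv_nth)
  then have "k \<le> j" "es ! k = e" by auto
  then show ?thesis using sorted_nth_mono[OF assms(1), of k j] assms(2) by simp
qed

lemma sorted_in_take_if_lt_nth:
  assumes "sorted (map c es)" and "e \<in> set es" and "c e < c (es ! j)"
  shows "e \<in> set (take j es)"
proof -
  obtain k where k: "k < length es" "es ! k = e" using assms(2) by (metis in_set_conv_nth)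
  have "k < j"
  proof (rule ccontr)
    assume "\<not> k < j"
    then have "c (es ! j) \<le> c (es ! k)" using sorted_nth_mono[OF assms(1), of j k] k(1) by simp
    with k(2) assms(3) show False by simp
  qed
  with k have "k < length (take j es)" and "take j es ! k = e" by auto
  then show ?thesis by (metis nth_mem)
qed

lemma lower_bound_witness:
  assumes "set es = E" and "s \<noteq> t" and "feasible_paths E src dst r s t R \<noteq> {}"
  obtains j where "j < length es" and "lower_bound es src dst c r s t R = c (es ! j)"
    and "\<exists>p \<in> feasible_paths E src dst r s t R. p \<subseteq> set (take (Suc j) es)"
    and "\<forall>p \<in> feasible_paths E src dst r s t R. \<not> p \<subseteq> set (take j es)"
proof -
  let ?F = "feasible_paths E src dst r s t R"
  let ?Q = "\<lambda>j. \<exists>p \<in> ?F. p \<subseteq> set (take (Suc j) es)"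
  define j where "j = (LEAST j. ?Q j)"
  obtain p0 where "p0 \<in> ?F" using assms(3) by blast
  have "p0 \<subseteq> set es" using feasible_path_subset[OF \<open>p0 \<in> ?F\<close>] assms(1) by simp
  moreover have "p0 \<noteq> {}" using feasible_path_nonempty[OF \<open>p0 \<in> ?F\<close> assms(2)] .
  ultimately have "es \<noteq> []" by auto
  then have "take (Suc (length es - 1)) es = es" by simp
  with \<open>p0 \<in> ?F\<close> \<open>p0 \<subseteq> set es\<close> have "?Q (length es - 1)" by auto
  then have "j \<le> length es - 1" and Qj: "?Q j"
    unfolding j_def by (rule Least_le, rule LeastI)
  from \<open>j \<le> length es - 1\<close> \<open>es \<noteq> []\<close> have "j < length es" by (cases es) auto
  moreover have "lower_bound es src dst c r s t R = c (es ! j)"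
    unfolding lower_bound_def j_def using assms(1) by simp
  moreover note Qj
  moreover have "\<forall>p \<in> ?F. \<not> p \<subseteq> set (take j es)"
  proof
    fix p assume "p \<in> ?F"
    show "\<not> p \<subseteq> set (take j es)"
    proof (cases j)
      case 0
      then show ?thesis using feasible_path_nonempty[OF \<open>p \<in> ?F\<close> assms(2)] by simp
    next
      case (Suc i)
      then have "\<not> ?Q i" using not_less_Least[of i ?Q] unfolding j_def by simp
      with \<open>p \<in> ?F\<close> Suc show ?thesis by blast
    qed
  qed
  ultimately show ?thesis by (rule that)
qed

lemma lower_bound_pos:
  assumes "finite E" and "set es = E" and "sorted (map c es)" and "s \<noteq> t"
    and "feasible_paths E src dst r s t R \<noteq> {}" and "copt E src dst c r s t R > 0"
  shows "lower_bound es src dst c r s t R > 0"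
proof -
  obtain j p where j: "j < length es" "lower_bound es src dst c r s t R = c (es ! j)"
    and p: "p \<in> feasible_paths E src dst r s t R" "p \<subseteq> set (take (Suc j) es)"
    using lower_bound_witness[OF assms(2,4,5)] by metis
  have "(\<Sum>e\<in>p. c e) > 0" using copt_le_path_cost[OF assms(1) p(1), of c] assms(6) by linarith
  then obtain e where "e \<in> p" "c e > 0" by (metis not_less sum_nonpos)
  moreover have "c e \<le> c (es ! j)"
    using sorted_le_nth_if_in_take[OF assms(3) j(1)] p(2) \<open>e \<in> p\<close> by blast
  ultimately show ?thesis using j(2) by simp
qed

lemma feasible_path_has_edge_ge_lower_bound:
  assumes "set es = E" and "sorted (map c es)" and "s \<noteq> t"
    and "p \<in> feasible_paths E src dst r s t R"
  shows "\<exists>e\<in>p. c e \<ge> lower_bound es src dst c r s t R"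
proof (rule ccontr)
  assume no_edge: "\<not> ?thesis"
  have "feasible_paths E src dst r s t R \<noteq> {}" using assms(4) by blast
  then obtain j where j: "lower_bound es src dst c r s t R = c (es ! j)"
    and no_prefix: "\<forall>p \<in> feasible_paths E src dst r s t R. \<not> p \<subseteq> set (take j es)"
    using lower_bound_witness[OF assms(1,3)] by metis
  have "p \<subseteq> set (take j es)"
  proof
    fix e assume "e \<in> p"
    then have "e \<in> set es" using feasible_path_subset[OF assms(4)] assms(1) by blast
    moreover have "c e < c (es ! j)" using no_edge \<open>e \<in> p\<close> j by (simp add: not_le)
    ultimately show "e \<in> set (take j es)" by (rule sorted_in_take_if_lt_nth[OF assms(2)])
  qed
  with no_prefix assms(4) show False by blast
qed

lemma scale_factor_upper_bound:
  assumes "n \<ge> 1"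
  shows "scale_factor n (real n * L) k = L / 2 ^ Suc k"
  using assms by (simp add: scale_factor_def power_one_over)

lemma le_two_power_ceiling_log:
  assumes "n \<ge> (1::nat)"
  shows "real n \<le> 2 ^ nat \<lceil>log 2 (real n)\<rceil>"
proof -
  have "log 2 (real n) \<ge> 0" using assms by simp
  have "real n = 2 powr (log 2 (real n))" using assms by simp
  also have "\<dots> \<le> 2 powr (real (nat \<lceil>log 2 (real n)\<rceil>))"
    by (intro powr_mono) (use \<open>log 2 (real n) \<ge> 0\<close> in linarith)+
  also have "\<dots> = 2 ^ nat \<lceil>log 2 (real n)\<rceil>" by (simp add: powr_realpow)
  finally show ?thesis .
qed

lemma scaled_cost_ge_power:
  assumes "L > 0" and "c e \<ge> L"
  shows "scaled_cost c (L / 2 ^ k) e \<ge> 2 ^ k"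
proof -
  have "int (2 ^ k) \<le> \<lfloor>c e / (L / 2 ^ k)\<rfloor>"
    unfolding le_floor_iff using assms by (simp add: field_simps)
  then have "real_of_int (int (2 ^ k)) \<le> real_of_int \<lfloor>c e / (L / 2 ^ k)\<rfloor>"
    by (simp only: of_int_le_iff)
  then show ?thesis unfolding scaled_cost_def by simp
qed

lemma copt_scaled_by_lower_bound_gt:
  assumes "finite E" and "set es = E" and "sorted (map c es)" and "s \<noteq> t"
    and "feasible_paths E src dst r s t R \<noteq> {}" and "copt E src dst c r s t R > 0"
    and "\<forall>e\<in>E. c e \<ge> 0" and "B < 2 ^ k"
  shows "copt E src dst (scaled_cost c (lower_bound es src dst c r s t R / 2 ^ k)) r s t R > B"
proof -
  define L where "L = lower_bound es src dst c r s t R"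
  have "L > 0" unfolding L_def by (rule lower_bound_pos[OF assms(1-6)])
  have "copt E src dst (scaled_cost c (L / 2 ^ k)) r s t R > B"
  proof (rule copt_gt_if_expensive_edge[OF assms(1,5)])
    show "\<forall>e\<in>E. scaled_cost c (L / 2 ^ k) e \<ge> 0"
      using assms(7) \<open>L > 0\<close> by (simp add: scaled_cost_def)
    show "\<forall>p \<in> feasible_paths E src dst r s t R. \<exists>e\<in>p. B < scaled_cost c (L / 2 ^ k) e"
    proof
      fix p assume "p \<in> feasible_paths E src dst r s t R"
      then obtain e where "e \<in> p" and "c e \<ge> L"
        using feasible_path_has_edge_ge_lower_bound[OF assms(2,3,4)] L_def by blast
      have "2 ^ k \<le> scaled_cost c (L / 2 ^ k) e"
        using scaled_cost_ge_power[of L c e k] \<open>L > 0\<close> \<open>c e \<ge> L\<close> by blast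
      with assms(8) \<open>e \<in> p\<close> show "\<exists>e\<in>p. B < scaled_cost c (L / 2 ^ k) e"
        by force
    qed
  qed
  then show ?thesis unfolding L_def .
qed

theorem lemma10:
  fixes V :: "'v set" and E :: "'e set" and src dst :: "'e \<Rightarrow> 'v"
    and c r :: "'e \<Rightarrow> real" and s t :: 'v and R :: real
    and es :: "'e list" and b :: nat
  assumes "finite V" and "finite E"
    and "\<forall>e\<in>E. src e \<in> V \<and> dst e \<in> V"
    and "weakly_connected V E src dst"
    and "s \<in> V" and "t \<in> V" and "s \<noteq> t"
    and "\<forall>e\<in>E. c e \<ge> 0" and "\<forall>e\<in>E. r e \<ge> 0" and "R \<ge> 0"
    and "feasible_paths E src dst r s t R \<noteq> {}"
    and "copt E src dst c r s t R > 0"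
    and "distinct es" and "set es = E" and "sorted (map c es)"
    and "1 \<le> b" and "b \<le> card V"
  shows "(\<exists>i. copt E src dst
                 (scaled_cost c (scale_factor (card V) (upper_bound (card V) es src dst c r s t R) i))
                 r s t R > real b)
       \<and> int (LEAST i. copt E src dst
                 (scaled_cost c (scale_factor (card V) (upper_bound (card V) es src dst c r s t R) i))
                 r s t R > real b) \<le> \<lceil>log 2 (real (card V))\<rceil>"
proof -
  define n where "n = card V"
  define k where "k = nat \<lceil>log 2 (real n)\<rceil>"
  define cost where "cost = (\<lambda>i. copt E src dst
      (scaled_cost c (scale_factor n (upper_bound n es src dst c r s t R) i)) r s t R)"
  have "n \<ge> 1" using assms(16,17) n_def by simp
  then have "log 2 (real n) \<ge> 0" by simp
  have "real b \<le> 2 ^ k"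
    using le_two_power_ceiling_log[OF \<open>n \<ge> 1\<close>] assms(17) n_def k_def by simp
  then have "real b < 2 ^ Suc k"
    using power_Suc[of "2::real" k] zero_less_power[of "2::real" k] by linarith
  have "cost k > real b"
    unfolding cost_def upper_bound_def scale_factor_upper_bound[OF \<open>n \<ge> 1\<close>]
    by (rule copt_scaled_by_lower_bound_gt[OF assms(2,14,15,7,11,12,8) \<open>real b < 2 ^ Suc k\<close>])
  then have "(LEAST i. cost i > real b) \<le> k" by (rule Least_le)
  moreover have "int k = \<lceil>log 2 (real n)\<rceil>"
    unfolding k_def using \<open>log 2 (real n) \<ge> 0\<close> by (intro nat_0_le) simp
  ultimately have "int (LEAST i. cost i > real b) \<le> \<lceil>log 2 (real n)\<rceil>" by linarith
  moreover from \<open>cost k > real b\<close> have "\<exists>i. cost i > real b" ..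
  ultimately have "(\<exists>i. cost i > real b) \<and> int (LEAST i. cost i > real b) \<le> \<lceil>log 2 (real n)\<rceil>"
    by blast
  then show ?thesis by (simp only: cost_def n_def)
qed

end
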